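(* Fix a positive integer $m$. Then the rate $\frac{\log_2|C_{n,m}|}{\binom{n}{2}}$ of the community code $C_{n,m}$ tends to $0$ as $n\to\infty$.
   Context: For integers $n\geq 2$, $N=\binom{n}{2}$ and $1\leq m\leq n$, the community code $C_{n,m}\subseteq\mathbb{F}_2^N$ consists of exactly those binary vectors of length $N$ that are the upper-triangular (off-diagonal) part of the adjacency matrix of a simple undirected graph on the labeled vertex set $\{1,\ldots,n\}$ which is a disjoint union of cliques, each clique having at least $m$ vertices. The rate of $C_{n,m}$ is $\log_2|C_{n,m}|/N$. *)

theory Defs
  imports "HOL-Analysis.Analysis"
begin

text \<open>Index set of the N = n choose 2 coordinates: pairs (i,j) with 1 <= i < j <= n.\<close>
definition upper_pairs :: "nat \<Rightarrow> (nat \<times> nat) set" where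
  "upper_pairs n = {(i, j). 1 \<le> i \<and> i < j \<and> j \<le> n}"

text \<open>A binary vector in F_2^N indexed by upper_pairs n is identified with its support,
  a subset of upper_pairs n.\<close>
definition upper_part :: "nat \<Rightarrow> (nat \<Rightarrow> nat \<Rightarrow> bool) \<Rightarrow> (nat \<times> nat) set" where
  "upper_part n E = {(i, j) \<in> upper_pairs n. E i j}"

definition community_graph :: "nat \<Rightarrow> nat \<Rightarrow> (nat \<Rightarrow> nat \<Rightarrow> bool) \<Rightarrow> bool" where
  "community_graph n m E \<longleftrightarrow>
     (\<forall>i j. E i j \<longrightarrow> E j i) \<and> (\<forall>i. \<not> E i i) \<and>
     (\<forall>i j. E i j \<longrightarrow> i \<in> {1..n} \<and> j \<in> {1..n}) \<and>
     (\<exists>P. partition_on {1..n} P \<and> (\<forall>B\<in>P. m \<le> card B) \<and>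
          (\<forall>i j. E i j \<longleftrightarrow> i \<noteq> j \<and> (\<exists>B\<in>P. i \<in> B \<and> j \<in> B)))"

definition community_code :: "nat \<Rightarrow> nat \<Rightarrow> (nat \<times> nat) set set" where
  "community_code n m = {upper_part n E | E. community_graph n m E}"

definition code_rate :: "nat \<Rightarrow> nat \<Rightarrow> real" where
  "code_rate n m = log 2 (real (card (community_code n m))) / real (n choose 2)"

end

theory Submission
  imports Defs "HOL-Real_Asymp.Real_Asymp"
begin

text \<open>A community graph is determined by its partition into cliques, and every partition of
  \<open>{1..n}\<close> is the kernel of some map \<open>{1..n} \<rightarrow> {1..n}\<close> (send each vertex to a representative
  of its block).  Hence \<open>|C\<^sub>n\<^sub>,\<^sub>m| \<le> n\<^sup>n\<close>, and the rate is at most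
  \<open>n log\<^sub>2 n / (n choose 2) = 2 log\<^sub>2 n / (n - 1) \<longrightarrow> 0\<close>.  The bound does not depend on \<open>m\<close>.\<close>

lemma equiv_eq_kernel:
  assumes "equiv A r"
  obtains f where "f \<in> A \<rightarrow>\<^sub>E A" and "\<And>x y. x \<in> A \<Longrightarrow> y \<in> A \<Longrightarrow> (x, y) \<in> r \<longleftrightarrow> f x = f y"
proof
  define rep where "rep x = (SOME z. z \<in> r `` {x})" for x
  have rep_in_class: "rep x \<in> r `` {x}" if "x \<in> A" for x
    unfolding rep_def by (rule someI) (rule equiv_class_self[OF assms that])
  have "rep x \<in> A" if "x \<in> A" for x
    using rep_in_class[OF that] equiv_type[OF assms] by blast
  then show "restrict rep A \<in> A \<rightarrow>\<^sub>E A"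
    by simp
  show "(x, y) \<in> r \<longleftrightarrow> restrict rep A x = restrict rep A y" if "x \<in> A" "y \<in> A" for x y
  proof
    assume "(x, y) \<in> r"
    then have "r `` {x} = r `` {y}"
      by (rule equiv_class_eq[OF assms])
    then show "restrict rep A x = restrict rep A y"
      using that by (simp add: rep_def)
  next
    assume "restrict rep A x = restrict rep A y"
    then have "rep x = rep y"
      using that by simp
    then have "rep x \<in> r `` {x} \<inter> r `` {y}"
      using rep_in_class[OF that(1)] rep_in_class[OF that(2)] by simp
    then show "(x, y) \<in> r"
      by (rule equiv_class_nondisjoint[OF assms])
  qed
qed

lemma community_code_subset_kernels:
  "community_code n m \<subseteq> (\<lambda>f. {(i, j) \<in> upper_pairs n. f i = f j}) ` ({1..n} \<rightarrow>\<^sub>E {1..n})"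
proof
  fix S assume "S \<in> community_code n m"
  then obtain E P where S: "S = upper_part n E"
    and P: "partition_on {1..n} P"
    and E: "\<And>i j. E i j \<longleftrightarrow> i \<noteq> j \<and> (\<exists>B\<in>P. i \<in> B \<and> j \<in> B)"
    unfolding community_code_def community_graph_def by auto
  obtain f where f: "f \<in> {1..n} \<rightarrow>\<^sub>E {1..n}"
    and same_block: "\<And>i j. i \<in> {1..n} \<Longrightarrow> j \<in> {1..n} \<Longrightarrow>
                       (i, j) \<in> {(x, y). \<exists>B\<in>P. x \<in> B \<and> y \<in> B} \<longleftrightarrow> f i = f j"
    using equiv_eq_kernel[OF equiv_partition_on[OF P]] by blast
  have "(i, j) \<in> S \<longleftrightarrow> (i, j) \<in> upper_pairs n \<and> f i = f j" for i j
  proof (cases "(i, j) \<in> upper_pairs n")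
    case True
    then have "i \<in> {1..n}" "j \<in> {1..n}" "i \<noteq> j"
      by (auto simp: upper_pairs_def)
    then show ?thesis
      using True same_block[of i j] by (simp add: S upper_part_def E)
  qed (simp add: S upper_part_def)
  then have "S = {(i, j) \<in> upper_pairs n. f i = f j}"
    by auto
  with f show "S \<in> (\<lambda>f. {(i, j) \<in> upper_pairs n. f i = f j}) ` ({1..n} \<rightarrow>\<^sub>E {1..n})"
    by blast
qed

lemma card_community_code_le: "card (community_code n m) \<le> n ^ n"
proof -
  have "card (community_code n m)
          \<le> card ((\<lambda>f. {(i, j) \<in> upper_pairs n. f i = f j}) ` ({1..n} \<rightarrow>\<^sub>E {1..n}))"
    by (intro card_mono community_code_subset_kernels) (simp add: finite_PiE)
  also have "\<dots> \<le> card ({1..n::nat} \<rightarrow>\<^sub>E {1..n::nat})"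
    by (intro card_image_le) (simp add: finite_PiE)
  also have "\<dots> = n ^ n"
    by (simp add: card_PiE)
  finally show ?thesis .
qed

lemma code_rate_nonneg: "0 \<le> code_rate n m"
  unfolding code_rate_def
  by (cases "card (community_code n m) = 0") (auto simp: log_def)

lemma log_card_community_code_le: "log 2 (card (community_code n m)) \<le> n * log 2 n"
proof (cases "card (community_code n m) = 0")
  case True
  then show ?thesis
    by (cases "n = 0") (simp_all add: log_def)
next
  case False
  then have "log 2 (card (community_code n m)) \<le> log 2 (real (n ^ n))"
    using card_community_code_le[of n m] by (subst log_le_cancel_iff) auto
  also have "\<dots> = n * log 2 n"
    by (cases "n = 0") (simp_all add: log_nat_power)
  finally show ?thesis .
qed

lemma code_rate_le:
  assumes "2 \<le> n"
  shows "code_rate n m \<le> 2 * log 2 (real n) / (real n - 1)"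
proof -
  have choose_two: "real (n choose 2) = n * (real n - 1) / 2"
    by (simp add: binomial_gbinomial gbinomial_Suc numeral_2_eq_2 field_simps)
  have "code_rate n m = log 2 (card (community_code n m)) / (n * (real n - 1) / 2)"
    unfolding code_rate_def choose_two by (rule refl)
  also have "\<dots> \<le> n * log 2 n / (n * (real n - 1) / 2)"
    using assms log_card_community_code_le by (intro divide_right_mono) auto
  also have "\<dots> = 2 * log 2 n / (real n - 1)"
    using assms by (simp add: field_simps)
  finally show ?thesis .
qed

theorem lemma5:
  fixes m :: nat
  assumes "1 \<le> m"
  shows "(\<lambda>n. code_rate n m) \<longlonglongrightarrow> 0"
proof (rule tendsto_sandwich)
  show "\<forall>\<^sub>F n in sequentially. 0 \<le> code_rate n m"
    by (simp add: code_rate_nonneg)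
  show "\<forall>\<^sub>F n in sequentially. code_rate n m \<le> 2 * log 2 (real n) / (real n - 1)"
    using code_rate_le eventually_sequentially by blast
  show "(\<lambda>n. 2 * log 2 (real n) / (real n - 1)) \<longlonglongrightarrow> 0"
    by real_asymp
qed simp

end
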